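(* Let $\sigma\in(0,0.25]$, $\pi_0\in(0,1)$, $w>0$, and let $\psi(\pi)=w$ if $\pi\ge\pi_0$ and $\psi(\pi)=0$ otherwise (i.e. the threshold equals the prior). Define $\pi_1(1)=\frac{(1+4\sigma)\pi_0}{1+4\sigma\pi_0}$, $\pi_1(0)=\frac{(1-4\sigma)\pi_0}{1-4\sigma\pi_0}$, $\Phi(C,\sigma,\pi_0)=0.5+2\sigma\pi_0+(0.5+2\sigma\pi_0)\psi(\pi_1(1))+(0.5-2\sigma\pi_0)\psi(\pi_1(0))$ and $\Phi(S,\sigma,\pi_0)=0.5+\psi(\pi_0)$; the expert chooses the complex rule iff $\Phi(C,\sigma,\pi_0)\ge\Phi(S,\sigma,\pi_0)$. Then the expert chooses the complex rule if and only if $$w\le\frac{4\sigma\pi_0}{1-4\sigma\pi_0}.$$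
   Context: Interpretation: the expert earns wage $w$ iff the posterior belief that he is competent is at least the prior $\pi_0$; the complex rule yields the correct action with probability $0.5+2\sigma$ if he is competent and $0.5$ otherwise, and the simple rule yields it with probability $0.5$ and reveals nothing. *)

theory Defs
  imports Complex_Main
begin

definition psi :: "real \<Rightarrow> real \<Rightarrow> real \<Rightarrow> real" where
  "psi w pi0 p = (if p \<ge> pi0 then w else 0)"

text \<open>Posterior after a correct outcome (signal 1) and an incorrect one (signal 0).\<close>
definition pi1_one :: "real \<Rightarrow> real \<Rightarrow> real" where
  "pi1_one \<sigma> pi0 = ((1 + 4*\<sigma>) * pi0) / (1 + 4*\<sigma>*pi0)"

definition pi1_zero :: "real \<Rightarrow> real \<Rightarrow> real" where
  "pi1_zero \<sigma> pi0 = ((1 - 4*\<sigma>) * pi0) / (1 - 4*\<sigma>*pi0)"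

definition Phi_C :: "real \<Rightarrow> real \<Rightarrow> real \<Rightarrow> real" where
  "Phi_C w \<sigma> pi0 = 0.5 + 2*\<sigma>*pi0 + (0.5 + 2*\<sigma>*pi0) * psi w pi0 (pi1_one \<sigma> pi0)
                    + (0.5 - 2*\<sigma>*pi0) * psi w pi0 (pi1_zero \<sigma> pi0)"

definition Phi_S :: "real \<Rightarrow> real \<Rightarrow> real" where
  "Phi_S w pi0 = 0.5 + psi w pi0 pi0"

definition chooses_complex :: "real \<Rightarrow> real \<Rightarrow> real \<Rightarrow> bool" where
  "chooses_complex w \<sigma> pi0 \<longleftrightarrow> Phi_C w \<sigma> pi0 \<ge> Phi_S w pi0"

end

theory Submission
  imports Defs
begin

text \<open>A correct outcome of the complex rule pushes the posterior weakly above the prior and an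
incorrect one strictly below it, so the complex rule earns the wage exactly after success, which
happens with probability \<open>1/2 + 2\<sigma>\<pi>\<^sub>0\<close>; the simple rule leaves the posterior at the prior and
earns \<open>w\<close> for sure. The comparison \<open>2\<sigma>\<pi>\<^sub>0 + (1/2 + 2\<sigma>\<pi>\<^sub>0) w \<ge> w\<close> is linear in \<open>w\<close>.\<close>

lemma pi1_one_ge_prior:
  fixes \<sigma> pi0 :: real
  assumes "0 \<le> \<sigma>" and "0 \<le> pi0" and "pi0 \<le> 1"
  shows "pi0 \<le> pi1_one \<sigma> pi0"
proof -
  have "0 \<le> 4*\<sigma>*pi0 * (1 - pi0)"
    using assms by simp
  then have "pi0 * (1 + 4*\<sigma>*pi0) \<le> (1 + 4*\<sigma>) * pi0"
    by (simp add: algebra_simps)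
  moreover have "0 < 1 + 4*\<sigma>*pi0"
    using assms by (simp add: add_pos_nonneg)
  ultimately show ?thesis
    unfolding pi1_one_def by (simp add: le_divide_eq)
qed

lemma pi1_zero_less_prior:
  fixes \<sigma> pi0 :: real
  assumes "0 < \<sigma>" and "0 < pi0" and "pi0 < 1" and "4*\<sigma>*pi0 < 1"
  shows "pi1_zero \<sigma> pi0 < pi0"
proof -
  have "0 < 4*\<sigma>*pi0 * (1 - pi0)"
    using assms by simp
  then have "(1 - 4*\<sigma>) * pi0 < pi0 * (1 - 4*\<sigma>*pi0)"
    by (simp add: algebra_simps)
  then show ?thesis
    unfolding pi1_zero_def using assms(4) by (simp add: divide_less_eq)
qed

lemma chooses_complex_iff_linear:
  fixes \<sigma> pi0 w :: real
  assumes "0 < \<sigma>" and "0 < pi0" and "pi0 < 1" and "4*\<sigma>*pi0 < 1"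
  shows "chooses_complex w \<sigma> pi0 \<longleftrightarrow> w * (1 - 4*\<sigma>*pi0) \<le> 4*\<sigma>*pi0"
proof -
  have "psi w pi0 (pi1_one \<sigma> pi0) = w" "psi w pi0 (pi1_zero \<sigma> pi0) = 0" "psi w pi0 pi0 = w"
    using pi1_one_ge_prior[of \<sigma> pi0] pi1_zero_less_prior[OF assms] assms
    by (simp_all add: psi_def)
  then have "chooses_complex w \<sigma> pi0 \<longleftrightarrow> 0.5 + w \<le> 0.5 + 2*\<sigma>*pi0 + (0.5 + 2*\<sigma>*pi0) * w"
    unfolding chooses_complex_def Phi_C_def Phi_S_def by simp
  also have "\<dots> \<longleftrightarrow> w * (1 - 4*\<sigma>*pi0) \<le> 4*\<sigma>*pi0"
    by (auto simp: algebra_simps)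
  finally show ?thesis .
qed

theorem corollary3:
  fixes \<sigma> pi0 w :: real
  assumes "0 < \<sigma>" and "\<sigma> \<le> 0.25"
    and "0 < pi0" and "pi0 < 1"
    and "0 < w"
  shows "chooses_complex w \<sigma> pi0 \<longleftrightarrow> w \<le> (4*\<sigma>*pi0) / (1 - 4*\<sigma>*pi0)"
proof -
  have "4*\<sigma>*pi0 < 4*\<sigma>"
    using assms(1,4) by simp
  then have "4*\<sigma>*pi0 < 1"
    using assms(2) by simp
  then show ?thesis
    using chooses_complex_iff_linear[OF assms(1,3,4)] by (simp add: le_divide_eq)
qed

end
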